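(* Let $\{x_i\}_{i\in[N]}$ be the global solution of the delayed consensus system described in the context. Then for almost all $t>2\tau$, \[ \frac{\mathrm d}{\mathrm dt}d_x(t)\le 4\int_{t-\tau}^t d_x(s-\tau)\,\mathrm ds+4\tau\int_{t-2\tau}^t\max_{l\in[N]}|\dot x_l(r)|\,\mathrm dr-N\underline a(t)d_x(t), \] where $\underline a(t):=\min_{i,j\in[N]}a_{ij}(t)$.
   Context: Let $N\ge2$, $d\ge1$ be integers, $[N]=\{1,\dots,N\}$, $0\le\sigma\le\tau$. Let $\psi:[0,\infty)\to[0,\infty)$ be continuous, nonincreasing, positive everywhere, with $\sup\psi\le1$. Given $x_i^0\in C([-\tau,0],\mathbb{R}^d)$, $\{x_i\}$ is the global solution (continuous on $[-\tau,\infty)$, continuously differentiable on $[0,\infty)$) of $\dot x_i(t)=\sum_{j\ne i}a_{ij}(t)(x_j(t-\tau)-x_i(t-\sigma))$ for $t>0$, with $a_{ij}(t)=\frac1{N-1}\psi(|x_i(t-\sigma)-x_j(t-\tau)|)$ for all $i,j\in[N]$, and $x_i=x_i^0$ on $[-\tau,0]$. $d_x(t):=\max_{i,j\in[N]}|x_i(t)-x_j(t)|$. *)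

theory Defs
  imports "HOL-Analysis.Analysis"
begin

definition diam_x :: "nat \<Rightarrow> (nat \<Rightarrow> real \<Rightarrow> 'a::euclidean_space) \<Rightarrow> real \<Rightarrow> real" where
  "diam_x N x t = Max {norm (x i t - x j t) | i j. i \<in> {1..N} \<and> j \<in> {1..N}}"

definition coupling :: "(real \<Rightarrow> real) \<Rightarrow> nat \<Rightarrow> real \<Rightarrow> real \<Rightarrow>
    (nat \<Rightarrow> real \<Rightarrow> 'a::euclidean_space) \<Rightarrow> nat \<Rightarrow> nat \<Rightarrow> real \<Rightarrow> real" where
  "coupling \<psi> N \<sigma> \<tau> x i j t = \<psi> (norm (x i (t - \<sigma>) - x j (t - \<tau>))) / (real N - 1)"

definition coupling_min :: "(real \<Rightarrow> real) \<Rightarrow> nat \<Rightarrow> real \<Rightarrow> real \<Rightarrow>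
    (nat \<Rightarrow> real \<Rightarrow> 'a::euclidean_space) \<Rightarrow> real \<Rightarrow> real" where
  "coupling_min \<psi> N \<sigma> \<tau> x t =
     Min {coupling \<psi> N \<sigma> \<tau> x i j t | i j. i \<in> {1..N} \<and> j \<in> {1..N}}"

end

theory Submission
  imports Defs
begin

text \<open>
  The diameter \<open>d\<^sub>x\<close> is the maximum of the finitely many pair distances
  \<open>|x\<^sub>i - x\<^sub>j|\<close>, each differentiable where it does not vanish. The maximum can fail to be
  differentiable only where two maximal distances cross with different slopes, or at an isolated
  common zero of all of them; both sets are discrete, hence countable and Lebesgue-null.

  At a point of differentiability let \<open>(i, j)\<close> be a farthest pair and \<open>e\<close> the unit vector
  along \<open>x\<^sub>i - x\<^sub>j\<close>; then \<open>d\<^sub>x' = e \<bullet> (v\<^sub>i - v\<^sub>j)\<close>. Every agent lies behind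
  \<open>x\<^sub>i\<close> and ahead of \<open>x\<^sub>j\<close> in direction \<open>e\<close>. Writing each delayed difference
  \<open>x\<^sub>k(t - \<tau>) - x\<^sub>i(t - \<sigma>)\<close> as the current difference plus two drifts, each bounded by the
  integral of the maximal speed over \<open>[t - \<tau>, t]\<close>, the equation gives
  \<open>e \<bullet> v\<^sub>i \<le> a(t) \<Sum>\<^sub>k e \<bullet> (x\<^sub>k - x\<^sub>i) + 2 \<integral> speed\<close>, symmetrically for \<open>j\<close>, and the
  two sums add up to \<open>-N d\<^sub>x(t)\<close>. Finally the equation bounds the speed at time \<open>r\<close> by
  \<open>d\<^sub>x(r - \<tau>)\<close> plus the drift over \<open>[r - \<tau>, r - \<sigma>]\<close>.
\<close>

lemma countable_discrete:
  fixes S :: "'a::euclidean_space set"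
  assumes "discrete S"
  shows "countable S"
proof -
  define D where "D = - {x. x islimpt S}"
  have "open D"
    unfolding D_def using closed_limpts[of S] by (simp add: open_Compl)
  moreover have "S \<subseteq> D"
    using assms unfolding D_def discrete_altdef islimpt_iff_eventually by auto
  moreover have "S sparse_in D"
    using \<open>open D\<close> by (subst sparse_in_open) (auto simp: D_def)
  ultimately show ?thesis
    using sparse_imp_countable[of D S] by (simp add: Int_absorb1)
qed

lemma discrete_isolated_points: "discrete {t \<in> Z. \<not> t islimpt Z}"
  unfolding discrete_altdef islimpt_iff_eventually by (auto elim: eventually_mono)

lemma discrete_transversal_crossings:
  fixes g h :: "real \<Rightarrow> real"
  assumes "\<And>t. t \<in> T \<Longrightarrow> (g has_real_derivative g' t) (at t)"
    and "\<And>t. t \<in> T \<Longrightarrow> (h has_real_derivative h' t) (at t)"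
  shows "discrete {t \<in> T. g t = h t \<and> g' t \<noteq> h' t}"
  unfolding discrete_altdef
proof
  fix t assume t: "t \<in> {t \<in> T. g t = h t \<and> g' t \<noteq> h' t}"
  then have "((\<lambda>s. g s - h s) has_real_derivative g' t - h' t) (at t)"
    using assms by (intro DERIV_diff) auto
  then have "((\<lambda>s. (g s - h s - (g t - h t)) / (s - t)) \<longlongrightarrow> g' t - h' t) (at t)"
    by (simp add: has_field_derivative_iff)
  then have "\<forall>\<^sub>F s in at t. (g s - h s - (g t - h t)) / (s - t) \<noteq> 0"
    using t by (intro tendsto_imp_eventually_ne) auto
  then show "\<forall>\<^sub>F s in at t. s \<notin> {t \<in> T. g t = h t \<and> g' t \<noteq> h' t}"
    by eventually_elim (use t in auto)
qed

lemma vector_derivative_zero_at_limpt_of_zeros: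
  fixes g :: "real \<Rightarrow> 'a::real_normed_vector"
  assumes g': "(g has_vector_derivative u) (at t)" and "t islimpt Z"
    and "\<And>s. s \<in> Z \<Longrightarrow> g s = 0" and "g t = 0"
  shows "u = 0"
proof (rule vector_derivative_unique_within)
  show "at t within insert t Z \<noteq> bot"
    using \<open>t islimpt Z\<close> trivial_limit_within islimpt_insert by blast
  show "(g has_vector_derivative u) (at t within insert t Z)"
    using g' by (rule has_vector_derivative_at_within)
  show "(g has_vector_derivative 0) (at t within insert t Z)"
    by (rule has_vector_derivative_transform_within[of "\<lambda>_. 0" _ _ _ 1]) (use assms in auto)
qed

lemma has_real_derivative_norm:
  fixes w :: "real \<Rightarrow> 'a::real_inner"
  assumes "(w has_vector_derivative w') (at t)" and "w t \<noteq> 0"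
  shows "((\<lambda>s. norm (w s)) has_real_derivative sgn (w t) \<bullet> w') (at t)"
proof -
  have "((\<lambda>s. norm (w s)) has_derivative (\<lambda>h. sgn (w t) \<bullet> (h *\<^sub>R w'))) (at t)"
    using has_derivative_compose[OF assms(1)[unfolded has_vector_derivative_def]
        has_derivative_norm[OF assms(2)]]
    by (simp add: inner_commute)
  moreover have "(\<lambda>h. sgn (w t) \<bullet> (h *\<^sub>R w')) = (*) (sgn (w t) \<bullet> w')"
    by (auto simp: fun_eq_iff)
  ultimately show ?thesis
    by (simp add: has_field_derivative_def)
qed

lemma has_real_derivative_norm_at_zero:
  fixes g :: "real \<Rightarrow> 'a::real_normed_vector"
  assumes "(g has_vector_derivative 0) (at t)" and "g t = 0"
  shows "((\<lambda>s. norm (g s)) has_real_derivative 0) (at t)"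
proof -
  have "((\<lambda>s. norm ((g s - g t) - (s - t) *\<^sub>R 0) / norm (s - t)) \<longlongrightarrow> 0) (at t)"
    using assms(1) unfolding has_vector_derivative_def has_derivative_iff_norm by blast
  then have "((\<lambda>s. norm (g s) / \<bar>s - t\<bar>) \<longlongrightarrow> 0) (at t)"
    using assms(2) by simp
  then have "((\<lambda>s. (norm (g s) - norm (g t)) / (s - t) - 0) \<longlongrightarrow> 0) (at t)"
    by (rule Lim_null_comparison[rotated]) (auto simp: assms(2) abs_divide)
  then show ?thesis
    by (simp add: has_field_derivative_iff)
qed

lemma DERIV_eq_if_touching_from_below:
  fixes f g :: "real \<Rightarrow> real"
  assumes "(f has_real_derivative a) (at t)" and "(g has_real_derivative b) (at t)"
    and "\<And>s. f s \<le> g s" and "f t = g t"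
  shows "a = b"
proof -
  have "((\<lambda>s. g s - f s) has_real_derivative b - a) (at t)"
    using assms(2,1) by (rule DERIV_diff)
  then have "b - a = 0"
    by (rule DERIV_local_min[of _ _ _ 1]) (use assms(3,4) in auto)
  then show ?thesis by simp
qed

lemma continuous_on_Max:
  fixes f :: "'p \<Rightarrow> 'b::topological_space \<Rightarrow> real"
  assumes "finite P" "P \<noteq> {}" "\<And>p. p \<in> P \<Longrightarrow> continuous_on S (f p)"
  shows "continuous_on S (\<lambda>s. Max ((\<lambda>p. f p s) ` P))"
  using assms
proof (induction P rule: finite_ne_induct)
  case (singleton p)
  then show ?case by simp
next
  case (insert p P)
  have "(\<lambda>s. Max ((\<lambda>p. f p s) ` insert p P)) = (\<lambda>s. max (f p s) (Max ((\<lambda>p. f p s) ` P)))"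
    using insert by (auto simp: Max_insert)
  then show ?case
    using insert by (auto intro: continuous_on_max)
qed

lemma eventually_maximizer_active:
  fixes f :: "'p \<Rightarrow> real \<Rightarrow> real"
  assumes fin: "finite P" and cont: "\<And>p. p \<in> P \<Longrightarrow> continuous (at t) (f p)"
  shows "\<forall>\<^sub>F s in at t. \<forall>q\<in>P. f q s = Max ((\<lambda>p. f p s) ` P) \<longrightarrow>
                                f q t = Max ((\<lambda>p. f p t) ` P)"
proof (cases "P = {}")
  case False
  define F where "F s = Max ((\<lambda>p. f p s) ` P)" for s
  have le_F: "f q s \<le> F s" if "q \<in> P" for q s
    unfolding F_def using fin that by (intro Max_ge) auto
  have "F t \<in> (\<lambda>p. f p t) ` P"
    unfolding F_def using fin False by (intro Max_in) auto
  then obtain a where a: "a \<in> P" "f a t = F t"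
    by auto
  have "\<forall>\<^sub>F s in at t. \<forall>q\<in>P. f q t \<noteq> F t \<longrightarrow> f q s < f a s"
  proof (rule eventually_ball_finite[OF fin], intro ballI)
    fix q assume q: "q \<in> P"
    show "\<forall>\<^sub>F s in at t. f q t \<noteq> F t \<longrightarrow> f q s < f a s"
    proof (cases "f q t = F t")
      case False
      then have "0 < f a t - f q t"
        using le_F[OF q, of t] a(2) by auto
      moreover have "((\<lambda>s. f a s - f q s) \<longlongrightarrow> f a t - f q t) (at t)"
        using cont[OF a(1)] cont[OF q] unfolding continuous_at by (rule tendsto_diff)
      ultimately have "\<forall>\<^sub>F s in at t. 0 < f a s - f q s"
        by (rule order_tendstoD(1)[rotated])
      then show ?thesis by eventually_elim auto
    qed simp
  qed
  then show ?thesis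
  proof eventually_elim
    case (elim s)
    show ?case
    proof (intro ballI impI)
      fix q assume "q \<in> P" "f q s = Max ((\<lambda>p. f p s) ` P)"
      then show "f q t = Max ((\<lambda>p. f p t) ` P)"
        using elim le_F[OF a(1), of s] unfolding F_def by force
    qed
  qed
qed simp

lemma has_real_derivative_Max:
  fixes f :: "'p \<Rightarrow> real \<Rightarrow> real"
  assumes fin: "finite P" and ne: "P \<noteq> {}"
    and cont: "\<And>p. p \<in> P \<Longrightarrow> continuous (at t) (f p)"
    and der: "\<And>p. p \<in> P \<Longrightarrow> f p t = Max ((\<lambda>p. f p t) ` P) \<Longrightarrow>
                (f p has_real_derivative c) (at t)"
  shows "((\<lambda>s. Max ((\<lambda>p. f p s) ` P)) has_real_derivative c) (at t)"
proof -
  define F where "F = (\<lambda>s. Max ((\<lambda>p. f p s) ` P))"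
  define A where "A = {p \<in> P. f p t = F t}"
  define err where "err p s = \<bar>(f p s - f p t) / (s - t) - c\<bar>" for p s
  have "(err p \<longlongrightarrow> 0) (at t)" if "p \<in> A" for p
  proof -
    have "((\<lambda>s. (f p s - f p t) / (s - t)) \<longlongrightarrow> c) (at t)"
      using der that unfolding A_def F_def by (simp add: has_field_derivative_iff)
    then show ?thesis
      unfolding err_def by (intro tendsto_rabs_zero LIM_zero)
  qed
  then have err_lim: "((\<lambda>s. \<Sum>p\<in>A. err p s) \<longlongrightarrow> 0) (at t)"
    using tendsto_sum[of A err "\<lambda>_. 0"] by simp
  have "\<forall>\<^sub>F s in at t. \<forall>q\<in>P. f q s = F s \<longrightarrow> f q t = F t"
    unfolding F_def using fin cont by (rule eventually_maximizer_active)
  then have "\<forall>\<^sub>F s in at t. norm ((F s - F t) / (s - t) - c) \<le> (\<Sum>p\<in>A. err p s)"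
  proof eventually_elim
    case (elim s)
    have "F s \<in> (\<lambda>p. f p s) ` P"
      unfolding F_def using fin ne by (intro Max_in) auto
    then obtain q where q: "q \<in> P" "F s = f q s"
      by auto
    then have "q \<in> A"
      using elim unfolding A_def by auto
    then have "norm ((F s - F t) / (s - t) - c) = err q s"
      using q by (simp add: err_def A_def)
    also have "\<dots> \<le> (\<Sum>p\<in>A. err p s)"
      using \<open>q \<in> A\<close> fin unfolding A_def by (intro member_le_sum) (auto simp: err_def)
    finally show ?case .
  qed
  then have "((\<lambda>s. (F s - F t) / (s - t) - c) \<longlongrightarrow> 0) (at t)"
    using err_lim by (rule Lim_null_comparison)
  then have "(F has_real_derivative c) (at t)"
    by (simp add: has_field_derivative_iff LIM_zero_iff)
  then show ?thesis
    by (simp add: F_def)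
qed

lemma has_real_derivative_Max_norm_zero:
  fixes w :: "'p \<Rightarrow> real \<Rightarrow> 'a::real_normed_vector"
  assumes fin: "finite P" and ne: "P \<noteq> {}"
    and deriv: "\<And>p. p \<in> P \<Longrightarrow> (w p has_vector_derivative w' p) (at t)"
    and limpt: "t islimpt {s. \<forall>p\<in>P. w p s = 0}" and zero: "\<And>p. p \<in> P \<Longrightarrow> w p t = 0"
  shows "((\<lambda>s. Max ((\<lambda>p. norm (w p s)) ` P)) has_real_derivative 0) (at t)"
proof (rule has_real_derivative_Max[OF fin ne])
  fix p assume p: "p \<in> P"
  show "continuous (at t) (\<lambda>s. norm (w p s))"
    using has_vector_derivative_continuous[OF deriv[OF p]] by (rule continuous_norm)
  have "w' p = 0"
    using vector_derivative_zero_at_limpt_of_zeros[OF deriv[OF p] limpt] zero p by auto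
  then show "((\<lambda>s. norm (w p s)) has_real_derivative 0) (at t)"
    using deriv[OF p] zero[OF p] by (intro has_real_derivative_norm_at_zero) auto
qed

lemma Max_norm_differentiable_if_tied_slopes_agree:
  fixes w :: "'p \<Rightarrow> real \<Rightarrow> 'a::real_inner"
  assumes fin: "finite P" and ne: "P \<noteq> {}"
    and deriv: "\<And>p. p \<in> P \<Longrightarrow> (w p has_vector_derivative w' p) (at t)"
    and nonzero: "p\<^sub>0 \<in> P" "w p\<^sub>0 t \<noteq> 0"
    and agree: "\<And>p q. p \<in> P \<Longrightarrow> q \<in> P \<Longrightarrow> w p t \<noteq> 0 \<Longrightarrow> w q t \<noteq> 0 \<Longrightarrow>
                  norm (w p t) = norm (w q t) \<Longrightarrow> sgn (w p t) \<bullet> w' p = sgn (w q t) \<bullet> w' q"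
  shows "(\<lambda>s. Max ((\<lambda>p. norm (w p s)) ` P)) differentiable (at t)"
proof -
  define M where "M = Max ((\<lambda>p. norm (w p t)) ` P)"
  have "M \<in> (\<lambda>p. norm (w p t)) ` P"
    unfolding M_def using fin ne by (intro Max_in) auto
  then obtain a where a: "a \<in> P" "norm (w a t) = M"
    by auto
  have "norm (w p\<^sub>0 t) \<le> M"
    unfolding M_def using fin nonzero by (intro Max_ge) auto
  then have active_nonzero: "w p t \<noteq> 0" if "norm (w p t) = M" for p
    using nonzero(2) that by auto
  have "((\<lambda>s. Max ((\<lambda>p. norm (w p s)) ` P)) has_real_derivative sgn (w a t) \<bullet> w' a) (at t)"
  proof (rule has_real_derivative_Max[OF fin ne])
    fix p assume p: "p \<in> P"
    show "continuous (at t) (\<lambda>s. norm (w p s))"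
      using has_vector_derivative_continuous[OF deriv[OF p]] by (rule continuous_norm)
    assume "norm (w p t) = Max ((\<lambda>p. norm (w p t)) ` P)"
    then have "norm (w p t) = M"
      by (simp add: M_def)
    then show "((\<lambda>s. norm (w p s)) has_real_derivative sgn (w a t) \<bullet> w' a) (at t)"
      using has_real_derivative_norm[OF deriv[OF p]] agree[OF p a(1)] active_nonzero a(2) by simp
  qed
  then show ?thesis
    by (auto simp: real_differentiable_def)
qed

lemma Max_norm_differentiable_off_countable:
  fixes w :: "'p \<Rightarrow> real \<Rightarrow> 'a::real_inner"
  assumes fin: "finite P" and ne: "P \<noteq> {}"
    and deriv: "\<And>p s. p \<in> P \<Longrightarrow> s \<in> S \<Longrightarrow> (w p has_vector_derivative w' p s) (at s)"
  shows "\<exists>B. countable B \<and>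
           (\<forall>t \<in> S - B. (\<lambda>s. Max ((\<lambda>p. norm (w p s)) ` P)) differentiable (at t))"
proof -
  define F where "F = (\<lambda>s. Max ((\<lambda>p. norm (w p s)) ` P))"
  define slope where "slope p s = sgn (w p s) \<bullet> w' p s" for p s
  define Z where "Z = {s \<in> S. \<forall>p\<in>P. w p s = 0}"
  define C where "C p q = {t \<in> {s \<in> S. w p s \<noteq> 0 \<and> w q s \<noteq> 0}.
                    norm (w p t) = norm (w q t) \<and> slope p t \<noteq> slope q t}" for p q
  define B where "B = {t \<in> Z. \<not> t islimpt Z} \<union> (\<Union>p\<in>P. \<Union>q\<in>P. C p q)"
  have "discrete (C p q)" if "p \<in> P" "q \<in> P" for p q
    unfolding C_def slope_def using that deriv
    by (intro discrete_transversal_crossings has_real_derivative_norm) auto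
  then have "countable B"
    unfolding B_def using fin
    by (intro countable_Un countable_UN countable_discrete discrete_isolated_points)
      (auto intro: countable_finite)
  moreover have "F differentiable (at t)" if t: "t \<in> S" "t \<notin> B" for t
  proof (cases "t \<in> Z")
    case True
    then have "t islimpt Z"
      using t by (auto simp: B_def)
    then have "t islimpt {s. \<forall>p\<in>P. w p s = 0}"
      by (rule islimpt_subset) (auto simp: Z_def)
    then have "(F has_real_derivative 0) (at t)"
      unfolding F_def using True t(1) deriv
      by (intro has_real_derivative_Max_norm_zero[OF fin ne]) (auto simp: Z_def)
    then show ?thesis
      by (auto simp: real_differentiable_def)
  next
    case False
    then obtain p\<^sub>0 where "p\<^sub>0 \<in> P" "w p\<^sub>0 t \<noteq> 0"
      using t(1) by (auto simp: Z_def)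
    then show ?thesis
      unfolding F_def using t deriv
      by (intro Max_norm_differentiable_if_tied_slopes_agree[OF fin ne]) (auto simp: B_def C_def slope_def)
  qed
  ultimately show ?thesis
    unfolding F_def[symmetric] by blast
qed

lemma sgn_inner_le_0_if_closer:
  fixes a b c :: "'a::real_inner"
  assumes "norm (c - b) \<le> norm (a - b)"
  shows "sgn (a - b) \<bullet> (c - a) \<le> 0"
proof -
  have "(norm (c - b))\<^sup>2 \<le> (norm (a - b))\<^sup>2"
    using assms by (simp add: power_mono)
  moreover have "2 * ((a - b) \<bullet> (c - a)) = (norm (c - b))\<^sup>2 - (norm (c - a))\<^sup>2 - (norm (a - b))\<^sup>2"
    using dot_norm[of "c - a" "a - b"] by (simp add: inner_commute)
  moreover have "0 \<le> (norm (c - a))\<^sup>2"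
    by simp
  ultimately have "(a - b) \<bullet> (c - a) \<le> 0"
    by linarith
  then show ?thesis
    by (simp add: sgn_div_norm divide_inverse mult_nonneg_nonpos)
qed

lemma inner_sgn_self:
  fixes a :: "'a::real_inner"
  shows "sgn a \<bullet> a = norm a"
  by (cases "a = 0") (simp_all add: sgn_div_norm dot_square_norm power2_eq_square)

lemma weighted_sum_le:
  fixes a y z :: "'i \<Rightarrow> real"
  assumes "finite K" and "sum a K \<le> 1" and "0 \<le> E"
    and "\<And>k. k \<in> K \<Longrightarrow> 0 \<le> a k" and "\<And>k. k \<in> K \<Longrightarrow> m \<le> a k"
    and "\<And>k. k \<in> K \<Longrightarrow> y k \<le> 0" and "\<And>k. k \<in> K \<Longrightarrow> z k \<le> E"
  shows "(\<Sum>k\<in>K. a k * (y k + z k)) \<le> m * sum y K + E"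
proof -
  have "(\<Sum>k\<in>K. a k * (y k + z k)) \<le> (\<Sum>k\<in>K. m * y k + a k * E)"
  proof (rule sum_mono)
    fix k assume k: "k \<in> K"
    have "a k * y k \<le> m * y k"
      using assms(5,6)[OF k] by (rule mult_right_mono_neg)
    moreover have "a k * z k \<le> a k * E"
      using assms(4,7)[OF k] by (rule mult_left_mono[rotated])
    ultimately show "a k * (y k + z k) \<le> m * y k + a k * E"
      by (simp add: distrib_left)
  qed
  also have "\<dots> = m * sum y K + sum a K * E"
    by (simp add: sum.distrib sum_distrib_left sum_distrib_right)
  also have "\<dots> \<le> m * sum y K + E"
    using assms(2,3,4) by (simp add: sum_nonneg mult_left_le_one_le)
  finally show ?thesis .
qed

lemma diam_x_eq_Max_pairs:
  "diam_x N x s = Max ((\<lambda>p. norm (x (fst p) s - x (snd p) s)) ` ({1..N} \<times> {1..N}))"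
  unfolding diam_x_def by (rule arg_cong[where f = Max]) force

lemma norm_diff_le_diam_x:
  assumes "i \<in> {1..N}" and "j \<in> {1..N}"
  shows "norm (x i s - x j s) \<le> diam_x N x s"
  unfolding diam_x_eq_Max_pairs using assms by (intro Max_ge) force+

lemma diam_x_attained:
  assumes "1 \<le> N"
  obtains i j where "i \<in> {1..N}" "j \<in> {1..N}" "norm (x i s - x j s) = diam_x N x s"
proof -
  have "diam_x N x s \<in> (\<lambda>p. norm (x (fst p) s - x (snd p) s)) ` ({1..N} \<times> {1..N})"
    unfolding diam_x_eq_Max_pairs using assms by (intro Max_in) auto
  then show ?thesis
    using that by auto
qed

lemma diam_x_nonneg: "1 \<le> N \<Longrightarrow> 0 \<le> diam_x N x s"
  by (metis diam_x_attained norm_ge_zero)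

lemma continuous_on_diam_x:
  assumes "1 \<le> N" and "\<And>i. i \<in> {1..N} \<Longrightarrow> continuous_on S (x i)"
  shows "continuous_on S (diam_x N x)"
proof -
  have "continuous_on S (\<lambda>s. Max ((\<lambda>p. norm (x (fst p) s - x (snd p) s)) ` ({1..N} \<times> {1..N})))"
    using assms by (intro continuous_on_Max continuous_intros) auto
  then show ?thesis
    by (simp add: diam_x_eq_Max_pairs[abs_def])
qed

lemma coupling_min_le_coupling:
  assumes "i \<in> {1..N}" and "j \<in> {1..N}"
  shows "coupling_min \<psi> N \<sigma> \<tau> x t \<le> coupling \<psi> N \<sigma> \<tau> x i j t"
proof -
  have "finite {coupling \<psi> N \<sigma> \<tau> x i j t | i j. i \<in> {1..N} \<and> j \<in> {1..N}}"
    by (rule finite_image_set2) auto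
  then show ?thesis
    unfolding coupling_min_def using assms by (intro Min_le) auto
qed

locale delayed_consensus =
  fixes N :: nat and \<sigma> \<tau> :: real and \<psi> :: "real \<Rightarrow> real"
    and x v :: "nat \<Rightarrow> real \<Rightarrow> 'a::euclidean_space"
  assumes N: "N \<ge> 2"
    and sig: "0 \<le> \<sigma>" "\<sigma> \<le> \<tau>"
    and psi_pos: "\<And>r. 0 \<le> r \<Longrightarrow> \<psi> r > 0"
    and psi_le1: "\<And>r. 0 \<le> r \<Longrightarrow> \<psi> r \<le> 1"
    and x_cont: "\<And>i. i \<in> {1..N} \<Longrightarrow> continuous_on {-\<tau>..} (x i)"
    and x_deriv: "\<And>i t. i \<in> {1..N} \<Longrightarrow> t \<ge> 0 \<Longrightarrow>
                    (x i has_vector_derivative v i t) (at t within {0..})"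
    and v_cont: "\<And>i. i \<in> {1..N} \<Longrightarrow> continuous_on {0..} (v i)"
    and ode: "\<And>i t. i \<in> {1..N} \<Longrightarrow> t > 0 \<Longrightarrow>
                v i t = (\<Sum>j\<in>{1..N} - {i}. coupling \<psi> N \<sigma> \<tau> x i j t *\<^sub>R (x j (t - \<tau>) - x i (t - \<sigma>)))"
begin

lemma tau_nonneg: "0 \<le> \<tau>"
  using sig by linarith

lemma x_has_vector_derivative_at:
  assumes "i \<in> {1..N}" and "0 < s"
  shows "(x i has_vector_derivative v i s) (at s)"
proof -
  have "(x i has_vector_derivative v i s) (at s within {0..})"
    using assms by (intro x_deriv) auto
  then have "(x i has_vector_derivative v i s) (at s within {0<..})"
    by (rule has_vector_derivative_within_subset) auto
  then show ?thesis
    using assms(2) by (subst (asm) at_within_open) auto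
qed

lemma diam_differentiable_off_countable:
  "\<exists>B. countable B \<and> (\<forall>t \<in> {0<..} - B. diam_x N x differentiable (at t))"
proof -
  have deriv: "((\<lambda>s. x (fst p) s - x (snd p) s) has_vector_derivative v (fst p) s - v (snd p) s) (at s)"
    if "p \<in> {1..N} \<times> {1..N}" "s \<in> {0<..}" for p s
    using that by (auto intro!: has_vector_derivative_diff x_has_vector_derivative_at)
  have fin: "finite ({1..N} \<times> {1..N})" and ne: "{1..N} \<times> {1..N} \<noteq> {}"
    using N by auto
  have diam_eq: "diam_x N x = (\<lambda>s. Max ((\<lambda>p. norm (x (fst p) s - x (snd p) s)) ` ({1..N} \<times> {1..N})))"
    by (rule ext) (rule diam_x_eq_Max_pairs)
  show ?thesis
    unfolding diam_eq
    by (rule Max_norm_differentiable_off_countable[where w = "\<lambda>p s. x (fst p) s - x (snd p) s", OF fin ne deriv])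
qed

lemma coupling_nonneg: "0 \<le> coupling \<psi> N \<sigma> \<tau> x i j t"
  unfolding coupling_def using psi_pos[of "norm (x i (t - \<sigma>) - x j (t - \<tau>))"] N by simp

lemma sum_coupling_le_1:
  assumes "i \<in> {1..N}"
  shows "(\<Sum>k\<in>{1..N} - {i}. coupling \<psi> N \<sigma> \<tau> x i k t) \<le> 1"
proof -
  have "coupling \<psi> N \<sigma> \<tau> x i k t \<le> 1 / (real N - 1)" for k
    unfolding coupling_def using psi_le1[of "norm (x i (t - \<sigma>) - x k (t - \<tau>))"] N
    by (simp add: divide_right_mono)
  then have "(\<Sum>k\<in>{1..N} - {i}. coupling \<psi> N \<sigma> \<tau> x i k t) \<le> real (card ({1..N} - {i})) * (1 / (real N - 1))"
    by (intro sum_bounded_above) auto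
  also have "\<dots> = 1"
    using assms N by (simp add: of_nat_diff)
  finally show ?thesis .
qed

definition speed :: "real \<Rightarrow> real" where
  "speed r = Max {norm (v l r) | l. l \<in> {1..N}}"

lemma norm_le_speed: "l \<in> {1..N} \<Longrightarrow> norm (v l r) \<le> speed r"
  unfolding speed_def Setcompr_eq_image by (intro Max_ge) auto

lemma speed_attained:
  obtains l where "l \<in> {1..N}" and "speed r = norm (v l r)"
proof -
  have "speed r \<in> (\<lambda>l. norm (v l r)) ` {1..N}"
    unfolding speed_def Setcompr_eq_image using N by (intro Max_in) auto
  then show ?thesis
    using that by auto
qed

lemma speed_nonneg: "0 \<le> speed r"
  by (metis speed_attained norm_ge_zero)

lemma integrable_speed:
  assumes "0 \<le> a"
  shows "speed integrable_on {a..b}"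
proof -
  have "continuous_on {0..} speed"
    unfolding speed_def[abs_def] Setcompr_eq_image using N v_cont
    by (intro continuous_on_Max continuous_on_norm) auto
  then show ?thesis
    using assms by (intro integrable_continuous_interval) (auto elim: continuous_on_subset)
qed

lemma integral_speed_mono:
  assumes "0 \<le> c" and "c \<le> a" and "b \<le> d"
  shows "integral {a..b} speed \<le> integral {c..d} speed"
  using assms by (intro integral_subset_le integrable_speed) (auto simp: speed_nonneg)

lemma norm_increment_le_integral_speed:
  assumes i: "i \<in> {1..N}" and "0 \<le> a" and "a \<le> b"
  shows "norm (x i b - x i a) \<le> integral {a..b} speed"
proof -
  have "(v i has_integral (x i b - x i a)) {a..b}"
  proof (rule fundamental_theorem_of_calculus[OF \<open>a \<le> b\<close>])
    fix s assume "s \<in> {a..b}"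
    then show "(x i has_vector_derivative v i s) (at s within {a..b})"
      using x_deriv[OF i, of s] assms by (auto intro: has_vector_derivative_within_subset)
  qed
  moreover have "norm (integral {a..b} (v i)) \<le> integral {a..b} speed"
    using calculation i assms norm_le_speed
    by (intro integral_norm_bound_integral integrable_speed) (auto simp: has_integral_integrable)
  ultimately show ?thesis
    by (simp add: integral_unique)
qed

lemma speed_le_delayed_diam:
  assumes "\<tau> < r"
  shows "speed r \<le> diam_x N x (r - \<tau>) + integral {r - \<tau>..r - \<sigma>} speed"
proof -
  define R where "R = diam_x N x (r - \<tau>) + integral {r - \<tau>..r - \<sigma>} speed"
  obtain l where l: "l \<in> {1..N}" "speed r = norm (v l r)"
    by (rule speed_attained)
  have "norm (x k (r - \<tau>) - x l (r - \<sigma>)) \<le> R" if "k \<in> {1..N}" for k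
  proof -
    have "norm (x l (r - \<sigma>) - x l (r - \<tau>)) \<le> integral {r - \<tau>..r - \<sigma>} speed"
      using assms sig by (intro norm_increment_le_integral_speed l) auto
    then have "norm (x l (r - \<tau>) - x l (r - \<sigma>)) \<le> integral {r - \<tau>..r - \<sigma>} speed"
      by (simp add: norm_minus_commute)
    then show ?thesis
      unfolding R_def using norm_diff_le_diam_x[OF that l(1), where s = "r - \<tau>"]
      by (intro norm_diff_triangle_le)
  qed
  then have "norm (v l r) \<le> (\<Sum>k\<in>{1..N} - {l}. coupling \<psi> N \<sigma> \<tau> x l k r * R)"
    unfolding ode[OF l(1) order.strict_trans1[OF tau_nonneg assms]]
    by (intro order.trans[OF norm_sum] sum_mono) (auto simp: coupling_nonneg mult_left_mono)
  also have "\<dots> = (\<Sum>k\<in>{1..N} - {l}. coupling \<psi> N \<sigma> \<tau> x l k r) * R"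
    by (simp add: sum_distrib_right)
  also have "\<dots> \<le> R"
  proof (rule mult_left_le_one_le)
    show "0 \<le> R"
      unfolding R_def using N assms sig
      by (intro add_nonneg_nonneg diam_x_nonneg integral_nonneg integrable_speed)
        (auto simp: speed_nonneg)
  qed (use sum_coupling_le_1[OF l(1)] in \<open>auto intro: sum_nonneg coupling_nonneg\<close>)
  finally show ?thesis
    using l(2) by (simp add: R_def)
qed

lemma integral_speed_le:
  assumes t: "2 * \<tau> < t"
  shows "integral {t - \<tau>..t} speed
           \<le> integral {t - \<tau>..t} (\<lambda>s. diam_x N x (s - \<tau>)) + \<tau> * integral {t - 2 * \<tau>..t} speed"
proof -
  define K where "K = integral {t - 2 * \<tau>..t} speed"
  have diam_int: "(\<lambda>s. diam_x N x (s - \<tau>)) integrable_on {t - \<tau>..t}"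
    using N x_cont tau_nonneg t
    by (intro integrable_continuous_interval continuous_on_compose2[OF continuous_on_diam_x])
      (auto intro!: continuous_intros)
  have "integral {t - \<tau>..t} speed \<le> integral {t - \<tau>..t} (\<lambda>s. diam_x N x (s - \<tau>) + K)"
  proof (rule integral_le)
    fix r assume r: "r \<in> {t - \<tau>..t}"
    have "integral {r - \<tau>..r - \<sigma>} speed \<le> K"
      unfolding K_def using r t sig by (intro integral_speed_mono) auto
    then show "speed r \<le> diam_x N x (r - \<tau>) + K"
      using speed_le_delayed_diam[of r] r t tau_nonneg by fastforce
  qed (use diam_int t tau_nonneg in \<open>auto intro: integrable_speed integrable_add integrable_const_ivl\<close>)
  also have "\<dots> = integral {t - \<tau>..t} (\<lambda>s. diam_x N x (s - \<tau>)) + \<tau> * K"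
    using tau_nonneg by (subst integral_add[OF diam_int integrable_const_ivl]) (auto simp: content_real)
  finally show ?thesis
    unfolding K_def .
qed

lemma inner_velocity_le:
  assumes i: "i \<in> {1..N}" and t: "\<tau> < t" and e: "norm e \<le> 1"
    and behind: "\<And>k. k \<in> {1..N} \<Longrightarrow> e \<bullet> (x k t - x i t) \<le> 0"
  shows "e \<bullet> v i t \<le> coupling_min \<psi> N \<sigma> \<tau> x t * (\<Sum>k\<in>{1..N}. e \<bullet> (x k t - x i t))
                       + 2 * integral {t - \<tau>..t} speed"
proof -
  define E where "E = integral {t - \<tau>..t} speed"
  define y where "y k = e \<bullet> (x k t - x i t)" for k
  define z where "z k = e \<bullet> ((x k (t - \<tau>) - x k t) - (x i (t - \<sigma>) - x i t))" for k
  have drift: "norm (x l t - x l s) \<le> E" if "l \<in> {1..N}" "t - \<tau> \<le> s" "s \<le> t" for l s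
    using that t unfolding E_def
    by (intro order.trans[OF norm_increment_le_integral_speed integral_speed_mono]) auto
  have "z k \<le> 2 * E" if "k \<in> {1..N}" for k
  proof -
    have "z k \<le> norm e * norm ((x k (t - \<tau>) - x k t) - (x i (t - \<sigma>) - x i t))"
      unfolding z_def by (rule order.trans[OF abs_ge_self Cauchy_Schwarz_ineq2])
    also have "\<dots> \<le> norm ((x k (t - \<tau>) - x k t) - (x i (t - \<sigma>) - x i t))"
      using e by (simp add: mult_left_le_one_le)
    also have "\<dots> \<le> norm (x k t - x k (t - \<tau>)) + norm (x i t - x i (t - \<sigma>))"
      by (metis norm_minus_commute norm_triangle_ineq4)
    also have "\<dots> \<le> 2 * E"
      using drift[OF that, of "t - \<tau>"] drift[OF i, of "t - \<sigma>"] sig by auto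
    finally show ?thesis .
  qed
  moreover have "0 \<le> E"
    unfolding E_def using t by (intro integral_nonneg integrable_speed) (auto simp: speed_nonneg)
  ultimately have "(\<Sum>k\<in>{1..N} - {i}. coupling \<psi> N \<sigma> \<tau> x i k t * (y k + z k))
                     \<le> coupling_min \<psi> N \<sigma> \<tau> x t * sum y ({1..N} - {i}) + 2 * E"
    using sum_coupling_le_1[OF i] coupling_nonneg behind
    by (intro weighted_sum_le) (auto simp: y_def intro: coupling_min_le_coupling[OF i])
  moreover have "e \<bullet> v i t = (\<Sum>k\<in>{1..N} - {i}. coupling \<psi> N \<sigma> \<tau> x i k t * (y k + z k))"
  proof -
    have summand: "e \<bullet> (c *\<^sub>R (x k (t - \<tau>) - x i (t - \<sigma>))) = c * (y k + z k)" for c k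
      unfolding y_def z_def by (simp add: inner_diff_right algebra_simps)
    show ?thesis
      unfolding ode[OF i order.strict_trans1[OF tau_nonneg t]] inner_sum_right
      by (rule sum.cong) (simp_all only: summand)
  qed
  moreover have "sum y ({1..N} - {i}) = sum y {1..N}"
    using i by (simp add: sum_diff1 y_def)
  ultimately show ?thesis
    by (simp add: y_def E_def)
qed

lemma diam_derivative_eq_relative_velocity:
  assumes t: "0 < t" and ij: "i \<in> {1..N}" "j \<in> {1..N}"
    and max: "norm (x i t - x j t) = diam_x N x t"
    and D: "(diam_x N x has_real_derivative D) (at t)"
  shows "D = sgn (x i t - x j t) \<bullet> (v i t - v j t)"
proof (cases "x i t - x j t = 0")
  case True
  have "0 = D"
    using True max N
    by (intro DERIV_eq_if_touching_from_below[OF DERIV_const D]) (auto intro: diam_x_nonneg)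
  then show ?thesis
    using True by simp
next
  case False
  then have "((\<lambda>s. norm (x i s - x j s)) has_real_derivative sgn (x i t - x j t) \<bullet> (v i t - v j t)) (at t)"
    using ij t by (intro has_real_derivative_norm has_vector_derivative_diff x_has_vector_derivative_at)
  then show ?thesis
    by (rule DERIV_eq_if_touching_from_below[OF _ D, symmetric])
      (use max ij in \<open>auto intro: norm_diff_le_diam_x\<close>)
qed

lemma relative_velocity_of_farthest_pair_le:
  assumes ij: "i \<in> {1..N}" "j \<in> {1..N}" and t: "\<tau> < t"
    and max: "norm (x i t - x j t) = diam_x N x t"
  shows "sgn (x i t - x j t) \<bullet> (v i t - v j t)
           \<le> 4 * integral {t - \<tau>..t} speed - real N * coupling_min \<psi> N \<sigma> \<tau> x t * diam_x N x t"
proof -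
  define e where "e = sgn (x i t - x j t)"
  define a where "a = coupling_min \<psi> N \<sigma> \<tau> x t"
  define E where "E = integral {t - \<tau>..t} speed"
  define S\<^sub>i where "S\<^sub>i = (\<Sum>k\<in>{1..N}. e \<bullet> (x k t - x i t))"
  define S\<^sub>j where "S\<^sub>j = (\<Sum>k\<in>{1..N}. (- e) \<bullet> (x k t - x j t))"
  have "e \<bullet> (x k t - x i t) \<le> 0" if "k \<in> {1..N}" for k
    using norm_diff_le_diam_x[OF that ij(2)] max unfolding e_def
    by (intro sgn_inner_le_0_if_closer) simp
  then have bound_i: "e \<bullet> v i t \<le> a * S\<^sub>i + 2 * E"
    unfolding E_def a_def S\<^sub>i_def using ij(1) t
    by (intro inner_velocity_le) (auto simp: e_def norm_sgn)
  have "(- e) \<bullet> (x k t - x j t) \<le> 0" if "k \<in> {1..N}" for k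
  proof -
    have "norm (x k t - x i t) \<le> norm (x j t - x i t)"
      by (metis max norm_diff_le_diam_x[OF that ij(1)] norm_minus_commute)
    then have "sgn (x j t - x i t) \<bullet> (x k t - x j t) \<le> 0"
      by (rule sgn_inner_le_0_if_closer)
    then show ?thesis
      unfolding e_def by (metis minus_diff_eq sgn_minus)
  qed
  then have bound_j: "(- e) \<bullet> v j t \<le> a * S\<^sub>j + 2 * E"
    unfolding E_def a_def S\<^sub>j_def using ij(2) t
    by (intro inner_velocity_le) (auto simp: e_def norm_sgn)
  have "S\<^sub>i + S\<^sub>j = (\<Sum>k\<in>{1..N}. - (e \<bullet> (x i t - x j t)))"
    unfolding S\<^sub>i_def S\<^sub>j_def sum.distrib[symmetric]
    by (rule sum.cong) (simp_all add: inner_diff_right)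
  also have "\<dots> = - real N * diam_x N x t"
    using max by (simp add: e_def inner_sgn_self)
  finally have sum_eq: "S\<^sub>i + S\<^sub>j = - real N * diam_x N x t" .
  have "e \<bullet> (v i t - v j t) \<le> a * S\<^sub>i + 2 * E + (a * S\<^sub>j + 2 * E)"
    using bound_i bound_j by (simp add: inner_diff_right)
  also have "\<dots> = 4 * E + a * (S\<^sub>i + S\<^sub>j)"
    by (simp add: algebra_simps)
  finally show ?thesis
    unfolding sum_eq e_def E_def a_def by (simp add: algebra_simps)
qed

lemma diam_derivative_le:
  assumes t: "\<tau> < t" and D: "(diam_x N x has_real_derivative D) (at t)"
  shows "D \<le> 4 * integral {t - \<tau>..t} speed - real N * coupling_min \<psi> N \<sigma> \<tau> x t * diam_x N x t"
proof -
  obtain i j where ij: "i \<in> {1..N}" "j \<in> {1..N}" and max: "norm (x i t - x j t) = diam_x N x t"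
    using N diam_x_attained by (metis one_le_numeral order.trans)
  have "0 < t"
    using t tau_nonneg by linarith
  then show ?thesis
    using diam_derivative_eq_relative_velocity[OF _ ij max D] relative_velocity_of_farthest_pair_le[OF ij t max]
    by simp
qed

end

theorem corollary3p3:
  fixes N :: nat and \<sigma> \<tau> :: real and \<psi> :: "real \<Rightarrow> real"
    and x v :: "nat \<Rightarrow> real \<Rightarrow> 'a::euclidean_space"
  assumes N: "N \<ge> 2"
    and sig: "0 \<le> \<sigma>" "\<sigma> \<le> \<tau>"
    and psi_cont: "continuous_on {0..} \<psi>"
    and psi_mono: "\<And>r s. 0 \<le> r \<Longrightarrow> r \<le> s \<Longrightarrow> \<psi> s \<le> \<psi> r"
    and psi_pos: "\<And>r. 0 \<le> r \<Longrightarrow> \<psi> r > 0"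
    and psi_le1: "\<And>r. 0 \<le> r \<Longrightarrow> \<psi> r \<le> 1"
    and x_cont: "\<And>i. i \<in> {1..N} \<Longrightarrow> continuous_on {-\<tau>..} (x i)"
    and x_deriv: "\<And>i t. i \<in> {1..N} \<Longrightarrow> t \<ge> 0 \<Longrightarrow>
                    (x i has_vector_derivative v i t) (at t within {0..})"
    and v_cont: "\<And>i. i \<in> {1..N} \<Longrightarrow> continuous_on {0..} (v i)"
    and ode: "\<And>i t. i \<in> {1..N} \<Longrightarrow> t > 0 \<Longrightarrow>
                v i t = (\<Sum>j\<in>{1..N} - {i}. coupling \<psi> N \<sigma> \<tau> x i j t *\<^sub>R (x j (t - \<tau>) - x i (t - \<sigma>)))"
  shows "AE t in lborel. t > 2 * \<tau> \<longrightarrow>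
           (\<exists>D. (diam_x N x has_real_derivative D) (at t) \<and>
              D \<le> 4 * integral {t - \<tau>..t} (\<lambda>s. diam_x N x (s - \<tau>))
                   + 4 * \<tau> * integral {t - 2 * \<tau>..t} (\<lambda>r. Max {norm (v l r) | l. l \<in> {1..N}})
                   - real N * coupling_min \<psi> N \<sigma> \<tau> x t * diam_x N x t)"
proof -
  \<comment> \<open>Continuity and monotonicity of \<psi> matter only for the existence of the solution.\<close>
  interpret delayed_consensus N \<sigma> \<tau> \<psi> x v
    using N sig psi_pos psi_le1 x_cont x_deriv v_cont ode by unfold_locales
  obtain B where B: "countable B" "\<And>t. t \<in> {0<..} - B \<Longrightarrow> diam_x N x differentiable (at t)"
    using diam_differentiable_off_countable by blast
  have bound: "\<exists>D. (diam_x N x has_real_derivative D) (at t) \<and>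
                 D \<le> 4 * integral {t - \<tau>..t} (\<lambda>s. diam_x N x (s - \<tau>))
                      + 4 * \<tau> * integral {t - 2 * \<tau>..t} speed
                      - real N * coupling_min \<psi> N \<sigma> \<tau> x t * diam_x N x t"
    if tB: "t \<notin> B" and t: "2 * \<tau> < t" for t
  proof -
    have "\<tau> < t"
      using t tau_nonneg by linarith
    then obtain D where D: "(diam_x N x has_real_derivative D) (at t)"
      using B(2)[of t] tB tau_nonneg by (auto simp: real_differentiable_def)
    then show ?thesis
      using diam_derivative_le[OF \<open>\<tau> < t\<close> D] integral_speed_le[OF t]
      by (intro exI[of _ D] conjI) linarith+
  qed
  have speed_eq: "(\<lambda>r. Max {norm (v l r) | l. l \<in> {1..N}}) = speed"
    by (simp add: speed_def[abs_def])
  have "AE t in lborel. t \<notin> B"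
    by (rule AE_I'[OF countable_imp_null_set_lborel[OF B(1)]]) auto
  then show ?thesis
    unfolding speed_eq by eventually_elim (use bound in blast)
qed

end
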